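(* Let $\{V_n:n\in\mathbb N\}$ be a family of pairwise disjoint countable subsets of the open square $(-1,1)^2$, and $\{W_n:n\in\mathbb N\}$ a family of pairwise disjoint subsets of $(-1,1)^2$, such that for each $n\in\mathbb N$ both $V_n$ and $W_n$ are dense in $[-1,1]^2$. Then for any $\lambda>1$ and any $\varepsilon>0$ there exists a $\lambda$-homeomorphism $h:[-1,1]^2\to[-1,1]^2$ such that $h|\partial [-1,1]^2=\mathrm{id}$, $d(h(x),x)<\varepsilon$ for every $x\in[-1,1]^2$, and $h(V_n)\subset W_n$ for every $n\in\mathbb N$.
   Context: $d$ is the Euclidean metric and $\partial[-1,1]^2$ is the boundary of the square. For $\lambda\ge1$, a bijection $h:X\to Y$ between metric spaces $(X,d)$, $(Y,\rho)$ is a $\lambda$-homeomorphism if $d(x,y)/\lambda\le \rho(h(x),h(y))\le\lambda d(x,y)$ for all $x,y\in X$. *)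

theory Defs
  imports "HOL-Analysis.Analysis"
begin

text \<open>The plane is modelled as real \<times> real, whose dist is the Euclidean metric.\<close>

definition sq :: "(real \<times> real) set" where
  "sq = cbox (-1, -1) (1, 1)"

definition open_sq :: "(real \<times> real) set" where
  "open_sq = box (-1, -1) (1, 1)"

definition lambda_homeo :: "real \<Rightarrow> ('a::metric_space \<Rightarrow> 'b::metric_space) \<Rightarrow> 'a set \<Rightarrow> 'b set \<Rightarrow> bool" where
  "lambda_homeo L h X Y \<longleftrightarrow> bij_betw h X Y \<and>
     (\<forall>x\<in>X. \<forall>y\<in>X. dist x y / L \<le> dist (h x) (h y) \<and> dist (h x) (h y) \<le> L * dist x y)"

end

theory Submission
  imports Defs
begin

(* The map h is the identity plus a displacement that is (1 - 1/L)-Lipschitz, which makes it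
   L-bi-Lipschitz and, by Banach's fixed point theorem, onto.  Enumerate the countable union of
   the V n as e 0, e 1, ...  At step k, compose the current map with a small tent-shaped bump,
   supported in the open square away from the images of e 0, ..., e (k - 1), that pushes the image
   of e k into its dense target W n.  The bumps are chosen so small that the Lipschitz constants of
   the displacements stay below 1 - 1/L and the maps converge uniformly; since e k is not moved
   after step k, the limit sends it into its target. *)

lemma lipschitz_on_pointwise_limit:
  fixes f :: "nat \<Rightarrow> 'a::metric_space \<Rightarrow> 'b::metric_space"
  assumes lip: "\<And>k. C-lipschitz_on U (f k)" and lim: "\<And>x. x \<in> U \<Longrightarrow> (\<lambda>k. f k x) \<longlonglongrightarrow> g x"
  shows "C-lipschitz_on U g"
proof (rule lipschitz_onI)
  show "0 \<le> C" using lipschitz_on_nonneg[OF lip] .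
  fix x y assume "x \<in> U" "y \<in> U"
  then have "(\<lambda>k. dist (f k x) (f k y)) \<longlonglongrightarrow> dist (g x) (g y)"
    by (intro tendsto_dist lim)
  moreover have "dist (f k x) (f k y) \<le> C * dist x y" for k
    using lip \<open>x \<in> U\<close> \<open>y \<in> U\<close> by (rule lipschitz_onD)
  ultimately show "dist (g x) (g y) \<le> C * dist x y"
    by (intro LIMSEQ_le_const2) auto
qed

lemma LIMSEQ_stationary_eq:
  fixes X :: "nat \<Rightarrow> 'a::t2_space"
  assumes "X \<longlonglongrightarrow> l" and stat: "\<And>k. n \<le> k \<Longrightarrow> X (Suc k) = X k"
  shows "l = X n"
proof -
  have "X k = X n" if "n \<le> k" for k
    using that
  proof (induction k rule: dec_induct)
    case (step k)
    then show ?case using stat[of k] by simp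
  qed simp
  then have "eventually (\<lambda>k. X k = X n) sequentially"
    unfolding eventually_sequentially by blast
  then have "X \<longlonglongrightarrow> X n" by (rule tendsto_eventually)
  with \<open>X \<longlonglongrightarrow> l\<close> show ?thesis by (rule LIMSEQ_unique)
qed

lemma summable_dist_Suc_imp_convergent:
  fixes f :: "nat \<Rightarrow> 'a::banach"
  assumes steps: "\<And>k. dist (f (Suc k)) (f k) \<le> \<delta> k" and "summable \<delta>"
  shows "\<exists>l. f \<longlonglongrightarrow> l \<and> dist l (f 0) \<le> suminf \<delta>"
proof -
  define d where "d k = f (Suc k) - f k" for k
  have d_le: "norm (d k) \<le> \<delta> k" for k
    using steps by (simp add: d_def dist_norm)
  have "summable d"
    using \<open>summable \<delta>\<close> by (rule summable_comparison_test') (rule d_le)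
  then have "(\<lambda>k. f 0 + (\<Sum>j<k. d j)) \<longlonglongrightarrow> f 0 + suminf d"
    by (intro tendsto_add tendsto_const summable_LIMSEQ)
  moreover have "f 0 + (\<Sum>j<k. d j) = f k" for k
    unfolding d_def by (simp add: sum_lessThan_telescope)
  moreover have "norm (suminf d) \<le> suminf \<delta>"
    using d_le \<open>summable \<delta>\<close> by (rule norm_suminf_le)
  ultimately show ?thesis by (auto simp: dist_norm)
qed

lemma
  fixes f :: "'a::real_normed_vector \<Rightarrow> 'a"
  assumes "\<eta>-lipschitz_on UNIV (\<lambda>x. f x - x)"
  shows dist_le_if_lipschitz_displacement: "dist (f x) (f y) \<le> (1 + \<eta>) * dist x y"
    and dist_ge_if_lipschitz_displacement: "(1 - \<eta>) * dist x y \<le> dist (f x) (f y)"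
proof -
  have w: "norm ((f x - x) - (f y - y)) \<le> \<eta> * dist x y"
    using lipschitz_onD[OF assms] by (simp add: dist_norm)
  have "f x - f y = (x - y) + ((f x - x) - (f y - y))" by simp
  then show "dist (f x) (f y) \<le> (1 + \<eta>) * dist x y"
    "(1 - \<eta>) * dist x y \<le> dist (f x) (f y)"
    using w norm_triangle_ineq[of "x - y" "(f x - x) - (f y - y)"]
      norm_diff_ineq[of "x - y" "(f x - x) - (f y - y)"]
    by (simp_all add: dist_norm algebra_simps)
qed

lemma bij_if_lipschitz_displacement:
  fixes f :: "'a::banach \<Rightarrow> 'a"
  assumes lip: "\<eta>-lipschitz_on UNIV (\<lambda>x. f x - x)" and "\<eta> < 1"
  shows "bij f"
proof (rule bijI)
  show "inj f"
  proof (rule injI)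
    fix x y assume "f x = f y"
    then have "(1 - \<eta>) * dist x y \<le> 0"
      using dist_ge_if_lipschitz_displacement[OF lip, of x y] by simp
    then show "x = y" using \<open>\<eta> < 1\<close> by (simp add: mult_le_0_iff)
  qed
  have "y \<in> range f" for y
  proof -
    have "dist (y - (f a - a)) (y - (f b - b)) \<le> \<eta> * dist a b" for a b
    proof -
      have "(y - (f a - a)) - (y - (f b - b)) = - ((f a - a) - (f b - b))" by simp
      then show ?thesis
        using lipschitz_onD[OF lip UNIV_I UNIV_I, of a b] by (simp only: dist_norm norm_minus_cancel)
    qed
    then have "\<exists>!x. y - (f x - x) = x"
      using lipschitz_on_nonneg[OF lip] \<open>\<eta> < 1\<close> by (intro banach_fix_type) auto
    then obtain x where "y - (f x - x) = x" by blast
    then have "f x = y" by (simp add: algebra_simps)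
    then show ?thesis by blast
  qed
  then show "surj f" by blast
qed

lemma image_eq_if_bij_fixing_outside:
  assumes "bij h" and fix_out: "\<forall>x. x \<notin> S \<longrightarrow> h x = x" and "S \<subseteq> A"
  shows "h ` A = A"
proof -
  have "h ` (- S) = - S" using fix_out by auto
  then have "h ` S = S"
    using \<open>bij h\<close> by (metis bij_image_Compl_eq double_complement)
  moreover have "h ` (A - S) = A - S" using fix_out by auto
  moreover have "A = S \<union> (A - S)" using \<open>S \<subseteq> A\<close> by blast
  ultimately show ?thesis by (metis image_Un)
qed

lemma lipschitz_displacement_compose:
  fixes f g :: "'a::real_normed_vector \<Rightarrow> 'a"
  assumes f: "s-lipschitz_on UNIV (\<lambda>x. f x - x)" and g: "c-lipschitz_on UNIV (\<lambda>x. g x - x)"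
  shows "(s + c * (1 + s))-lipschitz_on UNIV (\<lambda>x. g (f x) - x)"
proof -
  have "(1 + s)-lipschitz_on UNIV f"
    using lipschitz_on_add[OF lipschitz_on_id f] by simp
  then have "(c * (1 + s))-lipschitz_on UNIV (\<lambda>x. g (f x) - f x)"
    using g by (intro lipschitz_on_compose2) (auto intro: lipschitz_on_subset)
  then have "(s + c * (1 + s))-lipschitz_on UNIV (\<lambda>x. (f x - x) + (g (f x) - f x))"
    by (rule lipschitz_on_add[OF f])
  then show ?thesis by simp
qed

lemma exists_bump_into_closure:
  fixes p :: "'a::real_normed_vector"
  assumes "open U" "p \<in> U" "p \<in> closure W" "c > 0" "\<delta> > 0"
  shows "\<exists>g. g p \<in> W \<and> c-lipschitz_on UNIV (\<lambda>x. g x - x)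
           \<and> (\<forall>x. x \<notin> U \<longrightarrow> g x = x) \<and> (\<forall>x. dist (g x) x \<le> \<delta>)"
proof -
  obtain r where "r > 0" and r: "ball p r \<subseteq> U"
    using \<open>open U\<close> \<open>p \<in> U\<close> by (meson openE)
  obtain q where "q \<in> W" and q: "dist q p < min (c * r) \<delta>"
    using \<open>p \<in> closure W\<close> \<open>c > 0\<close> \<open>r > 0\<close> \<open>\<delta> > 0\<close>
    by (metis closure_approachable min_less_iff_conj mult_pos_pos)
  define \<phi> where "\<phi> x = max 0 (1 - dist x p / r)" for x
  define g where "g x = x + \<phi> x *\<^sub>R (q - p)" for x
  have \<phi>_01: "0 \<le> \<phi> x" "\<phi> x \<le> 1" for x
    unfolding \<phi>_def using \<open>r > 0\<close> by auto
  have \<phi>_lip: "\<bar>\<phi> x - \<phi> y\<bar> \<le> dist x y / r" for x y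
  proof -
    have "\<bar>dist y p - dist x p\<bar> \<le> dist x y"
      by (metis dist_commute dist_triangle_le abs_le_iff add.commute diff_le_eq minus_diff_eq dist_triangle)
    moreover have "(1 - dist x p / r) - (1 - dist y p / r) = (dist y p - dist x p) / r"
      by (simp add: diff_divide_distrib)
    ultimately have "\<bar>(1 - dist x p / r) - (1 - dist y p / r)\<bar> \<le> dist x y / r"
      using \<open>r > 0\<close> by (simp add: divide_right_mono)
    then show ?thesis unfolding \<phi>_def by linarith
  qed
  show ?thesis
  proof (intro exI conjI allI impI)
    show "g p \<in> W" unfolding g_def \<phi>_def using \<open>r > 0\<close> \<open>q \<in> W\<close> by simp
    show "c-lipschitz_on UNIV (\<lambda>x. g x - x)"
    proof (rule lipschitz_onI)
      fix x y
      have "dist (g x - x) (g y - y) = \<bar>\<phi> x - \<phi> y\<bar> * dist q p"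
        unfolding g_def by (simp add: dist_norm scaleR_diff_left[symmetric])
      also have "\<dots> \<le> dist x y / r * (c * r)"
        using \<phi>_lip q \<open>r > 0\<close> by (intro mult_mono) auto
      also have "\<dots> = c * dist x y" using \<open>r > 0\<close> by simp
      finally show "dist (g x - x) (g y - y) \<le> c * dist x y" .
    qed (use \<open>c > 0\<close> in simp)
  next
    fix x assume "x \<notin> U"
    then have "x \<notin> ball p r" using r by blast
    then have "dist x p \<ge> r" by (simp add: dist_commute)
    then show "g x = x" unfolding g_def \<phi>_def using \<open>r > 0\<close> by simp
  next
    fix x
    have "dist (g x) x = \<phi> x * dist q p"
      unfolding g_def using \<phi>_01[of x] by (simp add: dist_norm)
    also have "\<dots> \<le> dist q p" using \<phi>_01[of x] by (simp add: mult_left_le_one_le)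
    also have "\<dots> \<le> \<delta>" using q by simp
    finally show "dist (g x) x \<le> \<delta>" .
  qed
qed

lemma perturbation_step:
  fixes f :: "'a::banach \<Rightarrow> 'a"
  assumes "open S" and f_lip: "s-lipschitz_on UNIV (\<lambda>x. f x - x)" and "s < 1"
    and f_out: "\<forall>x. x \<notin> S \<longrightarrow> f x = x"
    and "a \<in> S" "a \<notin> A" "finite A" "S \<subseteq> closure T" "c > 0" "\<delta> > 0"
  shows "\<exists>f'. f' a \<in> T \<and> (s + c * (1 + s))-lipschitz_on UNIV (\<lambda>x. f' x - x)
           \<and> (\<forall>x. x \<notin> S \<longrightarrow> f' x = x) \<and> (\<forall>x\<in>A. f' x = f x) \<and> (\<forall>x. dist (f' x) (f x) \<le> \<delta>)"
proof -
  have "bij f" using f_lip \<open>s < 1\<close> by (rule bij_if_lipschitz_displacement)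
  then have "f ` S = S" using f_out by (rule image_eq_if_bij_fixing_outside) simp
  then have "f a \<in> S" using \<open>a \<in> S\<close> by blast
  moreover have "f a \<notin> f ` A"
    using \<open>bij f\<close> \<open>a \<notin> A\<close> by (auto simp: bij_def inj_eq)
  moreover have "open (S - f ` A)"
    using \<open>open S\<close> \<open>finite A\<close> by (intro open_Diff finite_imp_closed finite_imageI)
  ultimately obtain g where g: "g (f a) \<in> T" "c-lipschitz_on UNIV (\<lambda>x. g x - x)"
    "\<forall>x. x \<notin> S - f ` A \<longrightarrow> g x = x" "\<forall>x. dist (g x) x \<le> \<delta>"
    using exists_bump_into_closure[of "S - f ` A" "f a" T c \<delta>] \<open>S \<subseteq> closure T\<close> \<open>c > 0\<close> \<open>\<delta> > 0\<close>
    by blast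
  show ?thesis
  proof (intro exI conjI allI impI ballI)
    show "g (f a) \<in> T" by (fact g(1))
    show "(s + c * (1 + s))-lipschitz_on UNIV (\<lambda>x. g (f x) - x)"
      using f_lip g(2) by (rule lipschitz_displacement_compose)
    show "g (f x) = x" if "x \<notin> S" for x using that f_out g(3) by simp
    show "g (f x) = f x" if "x \<in> A" for x using that g(3) by simp
    show "dist (g (f x)) (f x) \<le> \<delta>" for x using g(4) by simp
  qed
qed

lemma placing_step:
  fixes f :: "'a::banach \<Rightarrow> 'a"
  assumes "open S" "e k \<in> S" "S \<subseteq> closure (\<tau> (e k))"
    and f_lip: "s-lipschitz_on UNIV (\<lambda>x. f x - x)" and "s < s'" "s' < 1"
    and f_out: "\<forall>x. x \<notin> S \<longrightarrow> f x = x" and placed: "\<forall>j<k. f (e j) \<in> \<tau> (e j)" and "\<delta> > 0"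
  shows "\<exists>f'. s'-lipschitz_on UNIV (\<lambda>x. f' x - x) \<and> (\<forall>x. x \<notin> S \<longrightarrow> f' x = x)
           \<and> (\<forall>j<Suc k. f' (e j) \<in> \<tau> (e j))
           \<and> (\<forall>x. dist (f' x) (f x) \<le> \<delta>) \<and> (\<forall>j<k. f' (e j) = f (e j))"
proof (cases "e k \<in> e ` {..<k}")
  case True
  then show ?thesis
    using f_lip \<open>s < s'\<close> f_out placed \<open>\<delta> > 0\<close>
    by (intro exI[of _ f]) (auto simp: less_Suc_eq intro: lipschitz_on_mono)
next
  case False
  define c where "c = (s' - s) / (1 + s')"
  have "s \<ge> 0" using f_lip by (rule lipschitz_on_nonneg)
  then have "c > 0" using \<open>s < s'\<close> by (simp add: c_def)
  have "s + c * (1 + s) \<le> s'"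
  proof -
    have "c * (1 + s) \<le> c * (1 + s')"
      using \<open>c > 0\<close> \<open>s < s'\<close> by (intro mult_left_mono) auto
    then show ?thesis using \<open>s \<ge> 0\<close> \<open>s < s'\<close> by (simp add: c_def)
  qed
  obtain f' where f': "f' (e k) \<in> \<tau> (e k)"
    "(s + c * (1 + s))-lipschitz_on UNIV (\<lambda>x. f' x - x)"
    "\<forall>x. x \<notin> S \<longrightarrow> f' x = x" "\<forall>x\<in>e ` {..<k}. f' x = f x" "\<forall>x. dist (f' x) (f x) \<le> \<delta>"
    using perturbation_step[OF \<open>open S\<close> f_lip _ f_out \<open>e k \<in> S\<close> False _ \<open>S \<subseteq> closure (\<tau> (e k))\<close>
        \<open>c > 0\<close> \<open>\<delta> > 0\<close>] \<open>s < s'\<close> \<open>s' < 1\<close>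
    by auto
  show ?thesis
    using f' placed \<open>s + c * (1 + s) \<le> s'\<close>
    by (intro exI[of _ f']) (auto simp: less_Suc_eq intro: lipschitz_on_mono)
qed

lemma exists_placing_sequence:
  fixes S :: "'a::banach set" and e :: "nat \<Rightarrow> 'a"
  assumes "open S" "range e \<subseteq> S" "\<And>j. S \<subseteq> closure (\<tau> (e j))"
    and "0 < \<eta>" "\<eta> < 1" "\<And>k. \<delta> k > 0"
  shows "\<exists>F. F 0 = id \<and> (\<forall>k. \<eta>-lipschitz_on UNIV (\<lambda>x. F k x - x) \<and> (\<forall>x. x \<notin> S \<longrightarrow> F k x = x)
           \<and> (\<forall>j<k. F k (e j) \<in> \<tau> (e j))
           \<and> (\<forall>x. dist (F (Suc k) x) (F k x) \<le> \<delta> k) \<and> (\<forall>j<k. F (Suc k) (e j) = F k (e j)))"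
proof -
  define s where "s k = \<eta> * (1 - (1/2) ^ k)" for k :: nat
  have s_le: "s k \<le> \<eta>" for k unfolding s_def using \<open>0 < \<eta>\<close> by simp
  have s_less: "s k < s (Suc k)" for k unfolding s_def using \<open>0 < \<eta>\<close> by simp
  \<comment> \<open>dependent_nat_choice cannot prescribe F 0, hence the conjunct k = 0 \<longrightarrow> f = id.\<close>
  define P where "P k f \<longleftrightarrow> (k = 0 \<longrightarrow> f = id) \<and> (s k)-lipschitz_on UNIV (\<lambda>x. f x - x)
      \<and> (\<forall>x. x \<notin> S \<longrightarrow> f x = x) \<and> (\<forall>j<k. f (e j) \<in> \<tau> (e j))" for k f
  define Q where "Q k f f' \<longleftrightarrow> (\<forall>x. dist (f' x) (f x) \<le> \<delta> k) \<and> (\<forall>j<k. f' (e j) = f (e j))"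
    for k and f f' :: "'a \<Rightarrow> 'a"
  have "P 0 id" unfolding P_def s_def by (simp add: lipschitz_on_constant)
  moreover have "\<exists>f'. P (Suc k) f' \<and> Q k f f'" if "P k f" for k f
  proof -
    have "e k \<in> S" using assms(2) by blast
    moreover have "s (Suc k) < 1" using s_le[of "Suc k"] \<open>\<eta> < 1\<close> by simp
    ultimately show ?thesis
      using placing_step[where S = S and e = e and k = k and \<tau> = \<tau> and s = "s k" and f = f
          and s' = "s (Suc k)" and \<delta> = "\<delta> k"] \<open>open S\<close> assms(3,6) that s_less
      unfolding P_def Q_def by auto
  qed
  ultimately obtain F where "\<forall>k. P k (F k) \<and> Q k (F k) (F (Suc k))"
    using dependent_nat_choice[of P Q] by blast
  then show ?thesis
    using s_le by (intro exI[of _ F]) (auto simp: P_def Q_def intro: lipschitz_on_mono)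
qed

lemma exists_lipschitz_perturbation_placing:
  fixes S U :: "'a::banach set"
  assumes "open S" "countable U" "U \<subseteq> S" "\<And>u. u \<in> U \<Longrightarrow> S \<subseteq> closure (\<tau> u)"
    and "0 < \<eta>" "\<eta> < 1" "0 < \<epsilon>"
  shows "\<exists>h. \<eta>-lipschitz_on UNIV (\<lambda>x. h x - x) \<and> (\<forall>x. x \<notin> S \<longrightarrow> h x = x)
           \<and> (\<forall>x. dist (h x) x < \<epsilon>) \<and> (\<forall>u\<in>U. h u \<in> \<tau> u)"
proof (cases "U = {}")
  case True
  have "\<eta>-lipschitz_on UNIV (\<lambda>x::'a. 0::'a)"
    using \<open>0 < \<eta>\<close> by (intro lipschitz_on_mono[OF lipschitz_on_constant]) auto
  then show ?thesis using True \<open>0 < \<epsilon>\<close> by (intro exI[of _ id]) simp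
next
  case False
  define e where "e = from_nat_into U"
  have "range e = U" unfolding e_def using \<open>countable U\<close> False by simp
  define \<delta> where "\<delta> k = \<epsilon> / 4 * (1/2) ^ k" for k :: nat
  have "\<delta> sums (\<epsilon> / 4 * (1 / (1 - 1/2)))"
    unfolding \<delta>_def by (intro sums_mult geometric_sums) simp
  then have \<delta>_sums: "\<delta> sums (\<epsilon> / 2)" by simp
  obtain F where F0: "F 0 = id" and F: "\<And>k. \<eta>-lipschitz_on UNIV (\<lambda>x. F k x - x)"
    "\<And>k x. x \<notin> S \<Longrightarrow> F k x = x" "\<And>k j. j < k \<Longrightarrow> F k (e j) \<in> \<tau> (e j)"
    "\<And>k x. dist (F (Suc k) x) (F k x) \<le> \<delta> k" "\<And>k j. j < k \<Longrightarrow> F (Suc k) (e j) = F k (e j)"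
    using exists_placing_sequence[of S e \<tau> \<eta> \<delta>] assms \<open>range e = U\<close> \<open>0 < \<epsilon>\<close>
    by (auto simp: \<delta>_def)
  have "\<exists>l. (\<lambda>k. F k x) \<longlonglongrightarrow> l \<and> dist l x \<le> \<epsilon> / 2" for x
    using summable_dist_Suc_imp_convergent[of "\<lambda>k. F k x" \<delta>] F(4) \<delta>_sums F0
    by (auto simp: sums_iff)
  then obtain h where lim: "\<And>x. (\<lambda>k. F k x) \<longlonglongrightarrow> h x" and near: "\<And>x. dist (h x) x \<le> \<epsilon> / 2"
    by metis
  show ?thesis
  proof (intro exI conjI allI impI ballI)
    show "\<eta>-lipschitz_on UNIV (\<lambda>x. h x - x)"
      by (rule lipschitz_on_pointwise_limit[of _ _ "\<lambda>k x. F k x - x", OF F(1)])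
        (intro tendsto_diff lim tendsto_const)
    show "h x = x" if "x \<notin> S" for x
      using lim[of x] F(2)[OF that] by (simp add: LIMSEQ_const_iff)
    show "dist (h x) x < \<epsilon>" for x using near[of x] \<open>0 < \<epsilon>\<close> by simp
    fix u assume "u \<in> U"
    then obtain j where "u = e j" using \<open>range e = U\<close> by blast
    have "h (e j) = F (Suc j) (e j)"
      using lim by (rule LIMSEQ_stationary_eq) (simp add: F(5))
    then show "h u \<in> \<tau> u" using F(3)[of j "Suc j"] \<open>u = e j\<close> by simp
  qed
qed

lemma lambda_homeo_if_lipschitz_displacement:
  fixes h :: "'a::real_normed_vector \<Rightarrow> 'a"
  assumes "L \<ge> 1" and lip: "(1 - 1 / L)-lipschitz_on UNIV (\<lambda>x. h x - x)" and "h ` A = A"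
  shows "lambda_homeo L h A A"
proof -
  have "2 - 1 / L \<le> L"
    using \<open>L \<ge> 1\<close> mult_right_mono[of 1 L "L - 1"] by (simp add: field_simps)
  then have upper: "dist (h x) (h y) \<le> L * dist x y" for x y
    using dist_le_if_lipschitz_displacement[OF lip, of x y] mult_right_mono[of "2 - 1 / L" L "dist x y"]
    by simp
  have lower: "dist x y / L \<le> dist (h x) (h y)" for x y
    using dist_ge_if_lipschitz_displacement[OF lip, of x y] by simp
  have "inj_on h A"
  proof (rule inj_onI)
    fix x y assume "h x = h y"
    then show "x = y" using lower[of x y] \<open>L \<ge> 1\<close> by (simp add: divide_le_0_iff)
  qed
  then show ?thesis
    unfolding lambda_homeo_def bij_betw_def using \<open>h ` A = A\<close> upper lower by blast
qed

theorem lemma3p4: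
  fixes V W :: "nat \<Rightarrow> (real \<times> real) set"
  assumes V_sub: "\<And>n. V n \<subseteq> open_sq"
    and V_count: "\<And>n. countable (V n)"
    and V_disj: "\<And>m n. m \<noteq> n \<Longrightarrow> V m \<inter> V n = {}"
    and W_sub: "\<And>n. W n \<subseteq> open_sq"
    and W_disj: "\<And>m n. m \<noteq> n \<Longrightarrow> W m \<inter> W n = {}"
    and V_dense: "\<And>n. sq \<subseteq> closure (V n)"
    and W_dense: "\<And>n. sq \<subseteq> closure (W n)"
    and lam: "L > 1"
    and eps: "\<epsilon> > 0"
  shows "\<exists>h. lambda_homeo L h sq sq
            \<and> (\<forall>x\<in>sq - open_sq. h x = x)
            \<and> (\<forall>x\<in>sq. dist (h x) x < \<epsilon>)
            \<and> (\<forall>n. h ` V n \<subseteq> W n)"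
proof -
  define \<tau> where "\<tau> x = W (THE n. x \<in> V n)" for x
  have \<tau>_V: "\<tau> x = W n" if "x \<in> V n" for x n
    unfolding \<tau>_def using that V_disj by (metis disjoint_iff the_equality)
  have "open_sq \<subseteq> sq" unfolding open_sq_def sq_def by (rule box_subset_cbox)
  have "open_sq \<subseteq> closure (\<tau> u)" if u: "u \<in> (\<Union>n. V n)" for u
  proof -
    obtain n where "u \<in> V n" using u by blast
    then have "\<tau> u = W n" by (rule \<tau>_V)
    then show ?thesis using W_dense[of n] \<open>open_sq \<subseteq> sq\<close> by (metis subset_trans)
  qed
  moreover have "open open_sq" unfolding open_sq_def by (rule open_box)
  moreover have "0 < 1 - 1 / L" "1 - 1 / L < 1" using lam by simp_all
  ultimately obtain h where lip: "(1 - 1 / L)-lipschitz_on UNIV (\<lambda>x. h x - x)"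
    and fix_out: "\<forall>x. x \<notin> open_sq \<longrightarrow> h x = x" and near: "\<forall>x. dist (h x) x < \<epsilon>"
    and placed: "\<forall>u\<in>(\<Union>n. V n). h u \<in> \<tau> u"
    using exists_lipschitz_perturbation_placing[of open_sq "\<Union>n. V n" \<tau> "1 - 1 / L" \<epsilon>]
      V_count V_sub eps by blast
  have "bij h" using lip \<open>1 - 1 / L < 1\<close> by (rule bij_if_lipschitz_displacement)
  then have "h ` sq = sq" using fix_out \<open>open_sq \<subseteq> sq\<close> by (rule image_eq_if_bij_fixing_outside)
  then have "lambda_homeo L h sq sq"
    using lam lip by (intro lambda_homeo_if_lipschitz_displacement) simp_all
  moreover have "h ` V n \<subseteq> W n" for n using placed \<tau>_V by blast
  ultimately show ?thesis using fix_out near by blast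
qed

end
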